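(* Let $\mathcal{Q}(z)=t(z)^2-\det\mathcal{T}(z)$ and $\lambda=z^2+z^{-2}$. Then $\mathcal{Q}(z)=\mathcal{Q}_{2N}(\lambda)$ where $\mathcal{Q}_{2N}$ is a polynomial of degree $2N$ in $\lambda$ (whose coefficients are functions on the phase space $M_{2N}$).
   Context: $SL_2^*$ denotes the Poisson variety with coordinate ring $\mathbf{C}[e,f,k^{\pm1}]$ and Poisson brackets $\{k,e\}=ke$, $\{k,f\}=-kf$, $\{e,f\}=2(k^2-k^{-2})$; $\omega=k^2+k^{-2}+ef$ is a Casimir and $\Sigma_t=\{\omega=t\}$ is a symplectic leaf. Fix $N\ge1$, $t_1,\dots,t_N\in\mathbf{C}$, $\xi\in\mathbf{C}^*$, $a_1,\dots,a_N\in\mathbf{C}^*$. The phase space is $M_{2N}=\Sigma_{t_1}\times\cdots\times\Sigma_{t_N}$ with coordinates $(e_j,f_j,k_j)$ at site $j$. Set $L_j(z)=\begin{pmatrix} zk_j-z^{-1}k_j^{-1} & e_j\\ f_j & zk_j^{-1}-z^{-1}k_j\end{pmatrix}$, $K(z)=\begin{pmatrix}\xi z-z^{-1}\xi^{-1}&0\\0&\xi z^{-1}-z\xi^{-1}\end{pmatrix}$, the reflection monodromy matrix $\mathcal{T}(z)=\frac{1}{z-z^{-1}}L_1(a_1z)\cdots L_N(a_Nz)\,K(z)\,L_N(z/a_N)\cdots L_1(z/a_1)$, and $t(z)=\frac12\operatorname{tr}\mathcal{T}(z)$. *)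

theory Defs
  imports "HOL-Analysis.Analysis"
begin

definition mat2 :: "complex \<Rightarrow> complex \<Rightarrow> complex \<Rightarrow> complex \<Rightarrow> complex^2^2" where
  "mat2 a b c d = vector [vector [a, b], vector [c, d]]"

definition Lmat :: "complex \<Rightarrow> complex \<Rightarrow> complex \<Rightarrow> complex \<Rightarrow> complex^2^2" where
  "Lmat e f k z = mat2 (z * k - inverse z * inverse k) e f (z * inverse k - inverse z * k)"

definition Kmat :: "complex \<Rightarrow> complex \<Rightarrow> complex^2^2" where
  "Kmat \<xi> z = mat2 (\<xi> * z - inverse z * inverse \<xi>) 0 0 (\<xi> * inverse z - z * inverse \<xi>)"

(* Reflection monodromy matrix: sites are indexed 1..N;
   T(z) = 1/(z - z^-1) L_1(a_1 z)...L_N(a_N z) K(z) L_N(z/a_N)...L_1(z/a_1) *)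
definition monodromy ::
  "nat \<Rightarrow> complex \<Rightarrow> (nat \<Rightarrow> complex) \<Rightarrow> (nat \<Rightarrow> complex) \<Rightarrow> (nat \<Rightarrow> complex) \<Rightarrow>
   (nat \<Rightarrow> complex) \<Rightarrow> complex \<Rightarrow> complex^2^2" where
  "monodromy N \<xi> a e f k z =
     mat (inverse (z - inverse z)) **
       (foldr (\<lambda>j M. Lmat (e j) (f j) (k j) (a j * z) ** M) [1..<N+1]
          (Kmat \<xi> z ** foldr (\<lambda>j M. M ** Lmat (e j) (f j) (k j) (z / a j)) [1..<N+1] (mat 1)))"

definition transfer ::
  "nat \<Rightarrow> complex \<Rightarrow> (nat \<Rightarrow> complex) \<Rightarrow> (nat \<Rightarrow> complex) \<Rightarrow> (nat \<Rightarrow> complex) \<Rightarrow>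
   (nat \<Rightarrow> complex) \<Rightarrow> complex \<Rightarrow> complex" where
  "transfer N \<xi> a e f k z = trace (monodromy N \<xi> a e f k z) / 2"

definition Qfun ::
  "nat \<Rightarrow> complex \<Rightarrow> (nat \<Rightarrow> complex) \<Rightarrow> (nat \<Rightarrow> complex) \<Rightarrow> (nat \<Rightarrow> complex) \<Rightarrow>
   (nat \<Rightarrow> complex) \<Rightarrow> complex \<Rightarrow> complex" where
  "Qfun N \<xi> a e f k z = (transfer N \<xi> a e f k z)^2 - det (monodromy N \<xi> a e f k z)"

definition phase_space ::
  "nat \<Rightarrow> (nat \<Rightarrow> complex) \<Rightarrow> ((nat \<Rightarrow> complex) \<times> (nat \<Rightarrow> complex) \<times> (nat \<Rightarrow> complex)) set" where
  "phase_space N t = {(e, f, k). \<forall>j\<in>{1..N}. k j \<noteq> 0 \<and>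
        (k j)^2 + (inverse (k j))^2 + e j * f j = t j}"

end

theory Submission
  imports Defs "HOL-Computational_Algebra.Polynomial"
begin

(* Put u = z + 1/z, y = z - 1/z and lambda = z^2 + z^-2, so that u^2 = lambda + 2 and
   y^2 = lambda - 2.  Splitting L_j(a_j z) and L_j(z/a_j) into their u- and y-parts, conjugation
   by one site preserves the shape [[u S + y D, u y B], [u y C, u S - y D]] with S, D, B, C
   polynomials in lambda, and raises the degree bounds deg S, deg D <= n, deg B, deg C < n by one;
   K(z) has this shape with n = 0.  For such a matrix divided by y, t^2 - det = D^2 + (lambda + 2) B C,
   a polynomial of degree <= 2N in lambda whose coefficient of lambda^(2N) is the square of the
   top coefficient d_N of D.  Across site j the top coefficients of S + D and D - S get multiplied
   by k_j^2 and k_j^-2, so d_N = (w + 1/w)/2 with w = xi * prod_j k_j^2, which is nonzero at a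
   suitable point of the phase space. *)

lemma mat2_nth [simp]:
  "mat2 a b c d $ 1 $ 1 = a" "mat2 a b c d $ 1 $ 2 = b"
  "mat2 a b c d $ 2 $ 1 = c" "mat2 a b c d $ 2 $ 2 = d"
  by (simp_all add: mat2_def)

lemma mat2_eq_iff:
  "(A::complex^2^2) = mat2 a b c d \<longleftrightarrow> A$1$1 = a \<and> A$1$2 = b \<and> A$2$1 = c \<and> A$2$2 = d"
  by (auto simp: vec_eq_iff forall_2)

lemma mat2_mult:
  "mat2 a b c d ** mat2 a' b' c' d' =
     mat2 (a*a' + b*c') (a*b' + b*d') (c*a' + d*c') (c*b' + d*d')"
  by (simp add: mat2_eq_iff matrix_matrix_mult_def sum_2)

lemma mat_mult_mat2: "mat x ** mat2 a b c d = mat2 (x*a) (x*b) (x*c) (x*d)"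
  by (simp add: mat2_eq_iff matrix_matrix_mult_def sum_2 mat_def)

lemma trace_mat2: "trace (mat2 a b c d) = a + d"
  by (simp add: trace_def sum_2)

lemma det_mat2: "det (mat2 a b c d) = a*d - b*c"
  by (simp add: det_2)

lemma foldr_matrix_mult_right:
  "foldr (\<lambda>j M. A j ** M) xs (X ** Y) = foldr (\<lambda>j M. A j ** M) xs X ** Y"
  by (induction xs) (simp_all add: matrix_mul_assoc)

lemma foldr_sandwich:
  "foldr (\<lambda>j M. A j ** M) xs (K ** foldr (\<lambda>j M. M ** B j) xs (mat 1)) =
   foldr (\<lambda>j M. A j ** M ** B j) xs K"
proof (induction xs)
  case (Cons x xs)
  have "foldr (\<lambda>j M. A j ** M) (x # xs) (K ** foldr (\<lambda>j M. M ** B j) (x # xs) (mat 1))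
      = A x ** foldr (\<lambda>j M. A j ** M) xs ((K ** foldr (\<lambda>j M. M ** B j) xs (mat 1)) ** B x)"
    by (simp add: matrix_mul_assoc)
  also have "\<dots> = A x ** foldr (\<lambda>j M. A j ** M ** B j) xs K ** B x"
    by (simp only: foldr_matrix_mult_right[of A xs "K ** foldr (\<lambda>j M. M ** B j) xs (mat 1)" "B x"]
        Cons matrix_mul_assoc)
  finally show ?case
    by (simp add: matrix_mul_assoc)
qed simp

text \<open>\<open>sh x\<close> and \<open>ch x\<close> are \<open>sinh\<close> and \<open>cosh\<close> of \<open>log x\<close>.\<close>
definition sh :: "complex \<Rightarrow> complex" where
  "sh x = (x - inverse x) / 2"

definition ch :: "complex \<Rightarrow> complex" where
  "ch x = (x + inverse x) / 2"

lemma sh_ch_split: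
  "x * z - inverse x * inverse z = sh x * (z + inverse z) + ch x * (z - inverse z)"
  "inverse x * z - x * inverse z = - sh x * (z + inverse z) + ch x * (z - inverse z)"
  unfolding sh_def ch_def by (simp_all add: algebra_simps add_divide_distrib diff_divide_distrib)

lemma Lmat_mult_arg:
  "Lmat e f k (a * z) =
     mat2 (sh (a * k) * (z + inverse z) + ch (a * k) * (z - inverse z)) e f
          (sh (a * inverse k) * (z + inverse z) + ch (a * inverse k) * (z - inverse z))"
  unfolding Lmat_def sh_ch_split(1)[symmetric] by (simp add: algebra_simps)

lemma Lmat_div_arg:
  "Lmat e f k (z / a) =
     mat2 (- sh (a * inverse k) * (z + inverse z) + ch (a * inverse k) * (z - inverse z)) e f
          (- sh (a * k) * (z + inverse z) + ch (a * k) * (z - inverse z))"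
  unfolding Lmat_def sh_ch_split(2)[symmetric] by (simp add: algebra_simps divide_inverse)

text \<open>The effect on \<open>(S, D, B, C)\<close> of conjugating
  \<open>mat2 (u*S + y*D) (u*y*B) (u*y*C) (u*S - y*D)\<close> by \<open>mat2 (p1*u + q1*y) e f (p2*u + q2*y)\<close>
  on the left and \<open>mat2 (-p2*u + q2*y) e f (-p1*u + q1*y)\<close> on the right, when
  \<open>u\<^sup>2 = l + 2\<close> and \<open>y\<^sup>2 = l - 2\<close>.\<close>
definition sandwich_step ::
  "'a::comm_ring_1 \<Rightarrow> 'a \<Rightarrow> 'a \<Rightarrow> 'a \<Rightarrow> 'a \<Rightarrow> 'a \<Rightarrow> 'a \<Rightarrow>
   'a \<times> 'a \<times> 'a \<times> 'a \<Rightarrow> 'a \<times> 'a \<times> 'a \<times> 'a" where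
  "sandwich_step l p1 q1 p2 q2 e f = (\<lambda>(S, D, B, C).
     (e*f*S + (l - 2)*(q2*e*C + q1*f*B + q1*q2*S - q1*p2*D + p1*q2*D) - (l + 2)*p1*p2*S,
      - e*f*D - (l + 2)*(p2*e*C - p1*f*B - p1*q2*S + q1*p2*S + p1*p2*D) + (l - 2)*q1*q2*D,
      e^2*C + 2*q1*e*S + 2*p1*e*D + (l - 2)*q1^2*B - (l + 2)*p1^2*B,
      f^2*B + 2*q2*f*S - 2*p2*f*D + (l - 2)*q2^2*C - (l + 2)*p2^2*C))"

definition quad_mat :: "complex \<Rightarrow> complex \<times> complex \<times> complex \<times> complex \<Rightarrow> complex^2^2" where
  "quad_mat z = (\<lambda>(S, D, B, C). let u = z + inverse z; y = z - inverse z in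
     mat2 (u*S + y*D) (u*y*B) (u*y*C) (u*S - y*D))"

lemma sandwich_quad_mat:
  assumes "z \<noteq> 0"
  defines "u \<equiv> z + inverse z" and "y \<equiv> z - inverse z"
  shows "mat2 (p1*u + q1*y) e f (p2*u + q2*y) ** quad_mat z X ** mat2 (-p2*u + q2*y) e f (-p1*u + q1*y)
       = quad_mat z (sandwich_step (z^2 + inverse z^2) p1 q1 p2 q2 e f X)"
proof -
  obtain S D B C where X: "X = (S, D, B, C)"
    by (cases X) auto
  have zz: "z * inverse z = 1"
    using assms(1) by simp
  have u2: "u^2 = (z^2 + inverse z^2) + 2" and y2: "y^2 = (z^2 + inverse z^2) - 2"
    unfolding u_def y_def power2_eq_square using zz by algebra+
  show ?thesis
    unfolding X quad_mat_def sandwich_step_def Let_def prod.case u_def[symmetric] y_def[symmetric]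
      mat2_mult mat2_eq_iff mat2_nth
    unfolding u2[symmetric] y2[symmetric] by (intro conjI; algebra)
qed

lemma Kmat_eq_quad_mat: "Kmat \<xi> z = quad_mat z (sh \<xi>, ch \<xi>, 0, 0)"
  unfolding Kmat_def quad_mat_def sh_def ch_def Let_def mat2_eq_iff
  by (simp add: algebra_simps add_divide_distrib diff_divide_distrib)

definition eval_quad :: "'a::comm_ring_1 \<Rightarrow> 'a poly \<times> 'a poly \<times> 'a poly \<times> 'a poly \<Rightarrow> 'a \<times> 'a \<times> 'a \<times> 'a" where
  "eval_quad x = (\<lambda>(s, d, b, c). (poly s x, poly d x, poly b x, poly c x))"

lemma eval_quad_sandwich_step:
  "eval_quad x (sandwich_step [:0, 1:] [:p1:] [:q1:] [:p2:] [:q2:] [:e:] [:f:] X)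
     = sandwich_step x p1 q1 p2 q2 e f (eval_quad x X)"
  by (cases X) (simp add: eval_quad_def sandwich_step_def algebra_simps)

text \<open>The polynomials in \<open>z\<^sup>2 + z\<^sup>-\<^sup>2\<close> whose values, via \<open>quad_mat\<close>, give \<open>K(z)\<close>
  conjugated by the sites in \<open>js\<close>.\<close>
fun reflection_polys ::
  "complex \<Rightarrow> (nat \<Rightarrow> complex) \<Rightarrow> (nat \<Rightarrow> complex) \<Rightarrow> (nat \<Rightarrow> complex) \<Rightarrow> (nat \<Rightarrow> complex) \<Rightarrow>
   nat list \<Rightarrow> complex poly \<times> complex poly \<times> complex poly \<times> complex poly" where
  "reflection_polys \<xi> a e f k [] = ([:sh \<xi>:], [:ch \<xi>:], 0, 0)"
| "reflection_polys \<xi> a e f k (j # js) =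
     sandwich_step [:0, 1:] [:sh (a j * k j):] [:ch (a j * k j):]
       [:sh (a j * inverse (k j)):] [:ch (a j * inverse (k j)):] [:e j:] [:f j:]
       (reflection_polys \<xi> a e f k js)"

lemma foldr_sandwich_eq_quad_mat:
  assumes "z \<noteq> 0"
  shows "foldr (\<lambda>j M. Lmat (e j) (f j) (k j) (a j * z) ** M ** Lmat (e j) (f j) (k j) (z / a j)) js (Kmat \<xi> z)
     = quad_mat z (eval_quad (z^2 + inverse z^2) (reflection_polys \<xi> a e f k js))"
proof (induction js)
  case Nil
  show ?case
    by (simp add: Kmat_eq_quad_mat eval_quad_def)
next
  case (Cons j js)
  show ?case
    unfolding foldr_Cons comp_def Cons.IH
    by (simp only: Lmat_mult_arg Lmat_div_arg sandwich_quad_mat[OF assms]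
        reflection_polys.simps eval_quad_sandwich_step)
qed

lemma monodromy_eq_quad_mat:
  assumes "z \<noteq> 0"
  shows "monodromy N \<xi> a e f k z =
     mat (inverse (z - inverse z)) ** quad_mat z (eval_quad (z^2 + inverse z^2) (reflection_polys \<xi> a e f k [1..<N+1]))"
  unfolding monodromy_def foldr_sandwich foldr_sandwich_eq_quad_mat[OF assms] ..

definition spectral_Q :: "'a::comm_ring_1 \<Rightarrow> 'a \<times> 'a \<times> 'a \<times> 'a \<Rightarrow> 'a" where
  "spectral_Q l = (\<lambda>(S, D, B, C). D^2 + (l + 2) * B * C)"

lemma poly_spectral_Q: "poly (spectral_Q [:0, 1:] X) x = spectral_Q x (eval_quad x X)"
  by (cases X) (simp add: spectral_Q_def eval_quad_def)

lemma trace_det_quad_mat: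
  assumes "z \<noteq> 0" "z^2 \<noteq> 1"
  shows "(trace (mat (inverse (z - inverse z)) ** quad_mat z X) / 2)^2
           - det (mat (inverse (z - inverse z)) ** quad_mat z X)
         = spectral_Q (z^2 + inverse z^2) X"
proof -
  obtain S D B C where X: "X = (S, D, B, C)"
    by (cases X) auto
  define u where "u = z + inverse z"
  define y where "y = z - inverse z"
  have "z * inverse z = 1"
    using assms(1) by simp
  then have u2: "u^2 = (z^2 + inverse z^2) + 2" and "z * y = z^2 - 1"
    unfolding u_def y_def power2_eq_square by (algebra, simp add: algebra_simps)
  then have "y \<noteq> 0"
    using assms(2) by auto
  then show ?thesis
    unfolding X quad_mat_def spectral_Q_def Let_def prod.case mat_mult_mat2 trace_mat2 det_mat2
      u_def[symmetric] y_def[symmetric] u2[symmetric]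
    by (simp add: field_simps) algebra
qed

lemma Qfun_eq_poly:
  assumes "z \<noteq> 0" "z^2 \<noteq> 1"
  shows "Qfun N \<xi> a e f k z = poly (spectral_Q [:0, 1:] (reflection_polys \<xi> a e f k [1..<N+1])) (z^2 + inverse z^2)"
  unfolding Qfun_def transfer_def monodromy_eq_quad_mat[OF assms(1)] trace_det_quad_mat[OF assms] poly_spectral_Q ..

lemma ch_sh_addition:
  assumes "A \<noteq> 0" "B \<noteq> 0"
  shows "(ch A * ch B - sh A * sh B) + (sh A * ch B - ch A * sh B) = A / B"
    and "(ch A * ch B - sh A * sh B) - (sh A * ch B - ch A * sh B) = B / A"
  using assms by (simp_all add: sh_def ch_def field_simps power2_eq_square)

definition quad_degree_le :: "nat \<Rightarrow> 'a::zero poly \<times> 'a poly \<times> 'a poly \<times> 'a poly \<Rightarrow> bool" where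
  "quad_degree_le n = (\<lambda>(s, d, b, c).
     (\<forall>i>n. coeff s i = 0) \<and> (\<forall>i>n. coeff d i = 0) \<and> (\<forall>i\<ge>n. coeff b i = 0) \<and> (\<forall>i\<ge>n. coeff c i = 0))"

definition top_coeffs :: "nat \<Rightarrow> 'a::ab_group_add poly \<times> 'a poly \<times> 'a poly \<times> 'a poly \<Rightarrow> 'a \<times> 'a" where
  "top_coeffs n = (\<lambda>(s, d, b, c). (coeff s n + coeff d n, coeff d n - coeff s n))"

lemma sandwich_step_quad_degree_le:
  fixes p1 q1 p2 q2 e f :: complex
  assumes "quad_degree_le n X"
  shows "quad_degree_le (Suc n) (sandwich_step [:0, 1:] [:p1:] [:q1:] [:p2:] [:q2:] [:e:] [:f:] X)"
  using assms
  by (cases X) (simp add: quad_degree_le_def sandwich_step_def ring_distribs numeral_mult_conv_smult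
      poly_const_pow coeff_pCons split: nat.split)

lemma top_coeffs_sandwich_step:
  fixes p1 q1 p2 q2 e f :: complex
  assumes "quad_degree_le n X"
  shows "top_coeffs (Suc n) (sandwich_step [:0, 1:] [:p1:] [:q1:] [:p2:] [:q2:] [:e:] [:f:] X) =
     (((q1*q2 - p1*p2) + (p1*q2 - q1*p2)) * fst (top_coeffs n X),
      ((q1*q2 - p1*p2) - (p1*q2 - q1*p2)) * snd (top_coeffs n X))"
  using assms
  by (cases X) (simp add: quad_degree_le_def top_coeffs_def sandwich_step_def ring_distribs
      numeral_mult_conv_smult poly_const_pow)

lemma reflection_polys_degree_le: "quad_degree_le (length js) (reflection_polys \<xi> a e f k js)"
proof (induction js)
  case Nil
  show ?case
    by (simp add: quad_degree_le_def coeff_pCons split: nat.split)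
qed (simp add: sandwich_step_quad_degree_le)

lemma top_coeffs_reflection_polys:
  assumes "\<forall>j\<in>set js. a j \<noteq> 0 \<and> k j \<noteq> 0"
  shows "top_coeffs (length js) (reflection_polys \<xi> a e f k js) =
           (\<xi> * (\<Prod>j\<leftarrow>js. k j^2), inverse (\<xi> * (\<Prod>j\<leftarrow>js. k j^2)))"
  using assms
proof (induction js)
  case Nil
  show ?case
    by (simp add: top_coeffs_def sh_def ch_def field_simps)
next
  case (Cons j js)
  then have nz: "a j * k j \<noteq> 0" "a j * inverse (k j) \<noteq> 0"
    and quot: "a j * k j / (a j * inverse (k j)) = k j^2" "a j * inverse (k j) / (a j * k j) = inverse (k j^2)"
    by (auto simp: field_simps power2_eq_square)
  then have "top_coeffs (length (j # js)) (reflection_polys \<xi> a e f k (j # js)) =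
      (k j^2 * fst (top_coeffs (length js) (reflection_polys \<xi> a e f k js)),
       inverse (k j^2) * snd (top_coeffs (length js) (reflection_polys \<xi> a e f k js)))"
    by (simp only: length_Cons reflection_polys.simps top_coeffs_sandwich_step[OF reflection_polys_degree_le]
        ch_sh_addition[OF nz] quot)
  then show ?case
    using Cons by (simp add: mult_ac)
qed

lemma coeff_mult_degree_bound:
  fixes p q :: "'a::comm_semiring_0 poly"
  assumes "degree p \<le> n" "degree q \<le> m"
  shows "coeff (p * q) (n + m) = coeff p n * coeff q m"
proof (cases "degree p = n \<and> degree q = m")
  case True
  then show ?thesis
    using coeff_mult_degree_sum[of p q] by simp
next
  case False
  then have "degree p < n \<or> degree q < m"
    using assms by auto
  moreover have "degree (p * q) \<le> degree p + degree q"
    by (rule degree_mult_le)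
  ultimately show ?thesis
    using assms by (auto simp: coeff_eq_0)
qed

lemma spectral_Q_degree:
  fixes X :: "complex poly \<times> complex poly \<times> complex poly \<times> complex poly"
  assumes "quad_degree_le n X"
  shows "degree (spectral_Q [:0, 1:] X) \<le> 2 * n"
    and "coeff (spectral_Q [:0, 1:] X) (2 * n) = ((fst (top_coeffs n X) + snd (top_coeffs n X)) / 2)^2"
proof -
  obtain s d b c where X: "X = (s, d, b, c)"
    by (cases X) auto
  have d: "degree d \<le> n"
    using assms by (auto simp: X quad_degree_le_def intro: degree_le)
  have "degree (([:0, 1:] + 2) * b * c) < 2 * n \<or> b = 0"
  proof (cases "n = 0")
    case True
    then show ?thesis
      using assms by (auto simp: X quad_degree_le_def intro: poly_eqI)
  next
    case False
    then have "degree b \<le> n - 1" "degree c \<le> n - 1"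
      using assms by (auto simp: X quad_degree_le_def intro!: degree_le)
    moreover have "degree ([:0, 1:] + 2 :: complex poly) = 1"
      by (simp add: numeral_poly)
    moreover have "degree (([:0, 1:] + 2) * b * c) \<le> degree ([:0, 1:] + 2 :: complex poly) + degree b + degree c"
      by (meson add_le_mono degree_mult_le le_refl order_trans)
    ultimately show ?thesis
      using False by linarith
  qed
  then have bc: "\<forall>i\<ge>2 * n. coeff (([:0, 1:] + 2) * b * c) i = 0"
    by (auto intro: coeff_eq_0)
  have d2: "degree (d^2) \<le> 2 * n"
    using degree_mult_le[of d d] d by (simp add: power2_eq_square)
  show "degree (spectral_Q [:0, 1:] X) \<le> 2 * n"
    unfolding X spectral_Q_def prod.case
    using bc by (intro degree_add_le[OF d2] degree_le) auto
  have "coeff (spectral_Q [:0, 1:] X) (2 * n) = coeff d n ^ 2"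
    unfolding X spectral_Q_def prod.case coeff_add
    using bc coeff_mult_degree_bound[OF d d] by (simp add: power2_eq_square mult_2)
  also have "coeff d n = (fst (top_coeffs n X) + snd (top_coeffs n X)) / 2"
    by (simp add: X top_coeffs_def)
  finally show "coeff (spectral_Q [:0, 1:] X) (2 * n) = ((fst (top_coeffs n X) + snd (top_coeffs n X)) / 2)^2" .
qed

lemma top_coeff_spectral_Q_reflection_polys:
  fixes \<xi> :: complex
  assumes "\<forall>j\<in>set js. a j \<noteq> 0 \<and> k j \<noteq> 0"
  defines "P \<equiv> \<xi> * (\<Prod>j\<leftarrow>js. k j^2)"
  shows "coeff (spectral_Q [:0, 1:] (reflection_polys \<xi> a e f k js)) (2 * length js) = ((P + inverse P) / 2)^2"
  unfolding P_def spectral_Q_degree(2)[OF reflection_polys_degree_le] top_coeffs_reflection_polys[OF assms(1)]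
  by simp

lemma poly_eq_sum_coeffs:
  fixes p :: "'a::comm_semiring_1 poly"
  assumes "degree p \<le> n"
  shows "poly p x = (\<Sum>i\<le>n. coeff p i * x^i)"
proof -
  have "poly p x = poly (\<Sum>i\<le>n. monom (coeff p i) i) x"
    using poly_as_sum_of_monoms'[OF assms] by simp
  then show ?thesis
    by (simp add: poly_sum poly_monom)
qed

lemma add_inverse_nonzero:
  fixes w :: "'a::field"
  assumes "w \<noteq> 0" "w^2 \<noteq> -1"
  shows "w + inverse w \<noteq> 0"
proof
  assume "w + inverse w = 0"
  moreover have "w * (w + inverse w) = w^2 + 1"
    using assms(1) by (simp add: field_simps power2_eq_square)
  ultimately show False
    using assms(2) by (simp add: eq_neg_iff_add_eq_0)
qed

text \<open>The leading coefficient is \<open>((w + w\<^sup>-\<^sup>1)/2)\<^sup>2\<close> with \<open>w = \<xi> \<Prod> k\<^sub>j\<^sup>2\<close>; taking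
  \<open>k\<^sub>1 = \<surd>2\<close> when \<open>\<xi>\<^sup>2 = -1\<close> (and all other \<open>k\<^sub>j = 1\<close>) avoids \<open>w\<^sup>2 = -1\<close>.\<close>
lemma exists_phase_space_top_coeff_nonzero:
  fixes \<xi> :: complex and t a :: "nat \<Rightarrow> complex"
  assumes "N \<ge> 1" "\<xi> \<noteq> 0" "\<forall>j\<in>{1..N}. a j \<noteq> 0"
  shows "\<exists>e f k. (e, f, k) \<in> phase_space N t \<and>
           coeff (spectral_Q [:0, 1:] (reflection_polys \<xi> a e f k [1..<N+1])) (2 * N) \<noteq> 0"
proof -
  define \<kappa> where "\<kappa> = (if \<xi>^2 = -1 then complex_of_real (sqrt 2) else 1)"
  have \<kappa>2: "\<kappa>^2 = (if \<xi>^2 = -1 then 2 else 1)"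
    unfolding \<kappa>_def by (simp flip: of_real_power)
  define k where "k j = (if j = 1 then \<kappa> else 1)" for j :: nat
  define e where "e j = t j - k j^2 - inverse (k j)^2" for j
  have k_nz: "k j \<noteq> 0" for j
    using \<kappa>2 by (auto simp: k_def split: if_splits)
  have point: "(e, \<lambda>_. 1, k) \<in> phase_space N t"
    using k_nz by (simp add: phase_space_def e_def)
  have "(\<Prod>j\<leftarrow>[1..<N+1]. k j^2) = (\<Prod>j\<in>{1..<N+1}. k j^2)"
    using prod.distinct_set_conv_list[of "[1..<N+1]" "\<lambda>j. k j^2"] by (simp only: distinct_upt set_upt)
  also have "\<dots> = (\<Prod>j\<in>{1..<N+1}. if j = 1 then \<kappa>^2 else 1)"
    by (rule prod.cong) (simp_all add: k_def)
  also have "\<dots> = \<kappa>^2"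
    using assms(1) by simp
  finally have prod_k: "(\<Prod>j\<leftarrow>[1..<N+1]. k j^2) = \<kappa>^2" .
  have "\<xi> * \<kappa>^2 \<noteq> 0" "(\<xi> * \<kappa>^2)^2 \<noteq> -1"
    using assms(2) \<kappa>2 by (auto simp: power_mult_distrib)
  then have "\<xi> * \<kappa>^2 + inverse (\<xi> * \<kappa>^2) \<noteq> 0"
    by (rule add_inverse_nonzero)
  moreover have "\<forall>j\<in>set [1..<N+1]. a j \<noteq> 0 \<and> k j \<noteq> 0"
    using assms(3) k_nz by auto
  then have "coeff (spectral_Q [:0, 1:] (reflection_polys \<xi> a e (\<lambda>_. 1) k [1..<N+1])) (2 * N)
      = ((\<xi> * \<kappa>^2 + inverse (\<xi> * \<kappa>^2)) / 2)^2"
    using top_coeff_spectral_Q_reflection_polys[of "[1..<N+1]" a k \<xi> e "\<lambda>_. 1"]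
    by (simp only: prod_k length_upt add_diff_cancel_right')
  ultimately have "coeff (spectral_Q [:0, 1:] (reflection_polys \<xi> a e (\<lambda>_. 1) k [1..<N+1])) (2 * N) \<noteq> 0"
    by simp
  then show ?thesis
    using point by blast
qed

theorem mainTheorem4:
  fixes N :: nat and \<xi> :: complex and t a :: "nat \<Rightarrow> complex"
  assumes "N \<ge> 1" and "\<xi> \<noteq> 0" and "\<forall>j\<in>{1..N}. a j \<noteq> 0"
  shows "\<exists>c :: nat \<Rightarrow> (nat \<Rightarrow> complex) \<times> (nat \<Rightarrow> complex) \<times> (nat \<Rightarrow> complex) \<Rightarrow> complex.
           (\<forall>(e, f, k) \<in> phase_space N t. \<forall>z::complex. z \<noteq> 0 \<and> z^2 \<noteq> 1 \<longrightarrow>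
              Qfun N \<xi> a e f k z = (\<Sum>i\<le>2*N. c i (e, f, k) * (z^2 + (inverse z)^2)^i))
         \<and> (\<exists>p \<in> phase_space N t. c (2*N) p \<noteq> 0)"
proof -
  define c where "c i = (\<lambda>(e, f, k). coeff (spectral_Q [:0, 1:] (reflection_polys \<xi> a e f k [1..<N+1])) i)"
    for i
  have "Qfun N \<xi> a e f k z = (\<Sum>i\<le>2*N. c i (e, f, k) * (z^2 + (inverse z)^2)^i)"
    if "z \<noteq> 0" "z^2 \<noteq> 1" for e f k z
  proof -
    have "degree (spectral_Q [:0, 1:] (reflection_polys \<xi> a e f k [1..<N+1])) \<le> 2 * N"
      using spectral_Q_degree(1)[OF reflection_polys_degree_le, of \<xi> a e f k "[1..<N+1]"]
      by (simp del: upt_Suc)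
    then show ?thesis
      unfolding Qfun_eq_poly[OF that] c_def by (simp add: poly_eq_sum_coeffs)
  qed
  moreover have "\<exists>p \<in> phase_space N t. c (2*N) p \<noteq> 0"
  proof -
    obtain e f k where "(e, f, k) \<in> phase_space N t"
        "coeff (spectral_Q [:0, 1:] (reflection_polys \<xi> a e f k [1..<N+1])) (2 * N) \<noteq> 0"
      using exists_phase_space_top_coeff_nonzero[OF assms] by blast
    then show ?thesis
      by (intro bexI[of _ "(e, f, k)"]) (simp_all add: c_def)
  qed
  ultimately show ?thesis
    by blast
qed

end
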